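(* Let $(A,\mathcal H)$ be a commutative Hopf algebroid and $I\subseteq\mathcal H$ a Hopf ideal. Then $I$ is normal if and only if $\langle s-t\rangle\subseteq I$ and $\mathcal H/I\cong\overline{\mathcal H}/\bar I$ is a quotient right $\mathcal H$-comodule of $\overline{\mathcal H}$ with respect to the coaction $\delta:\overline{\mathcal H}\to\overline{\mathcal H}\otimes_A\mathcal H$, $\bar h\mapsto\sum\overline{h_2}\otimes_A\mathcal S(h_1)h_3$, i.e. there is a map $\tilde\delta:\overline{\mathcal H}/\bar I\to(\overline{\mathcal H}/\bar I)\otimes_A\mathcal H$ with $\tilde\delta\circ p=(p\otimes_A\mathcal H)\circ\delta$, where $p:\overline{\mathcal H}\to\overline{\mathcal H}/\bar I$ is the projection.
   Context: A commutative Hopf algebroid $(A,\mathcal H)$ over a field $\Bbbk$: commutative $\Bbbk$-algebras $A,\mathcal H$ with algebra maps $s,t:A\to\mathcal H$, $\varepsilon:\mathcal H\to A$, $\Delta:\mathcal H\to\mathcal H\otimes_A\mathcal H$ (left factor an $A$-module via $t$, right via $s$), $\mathcal S:\mathcal H\to\mathcal H$ such that $(\mathcal H,\Delta,\varepsilon)$ is a coassociative counital $A$-coring, $\mathcal Ss=t$, $\mathcal St=s$, $\mathcal S^2=\mathrm{id}$, $\sum\mathcal S(u_1)u_2=t\varepsilon(u)$, $\sum u_1\mathcal S(u_2)=s\varepsilon(u)$ ($\Delta(u)=\sum u_1\otimes_Au_2$). A Hopf ideal: ideal $I$ with $\varepsilon(I)=0$, $\Delta(I)\subseteq$ image of $\mathcal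 H\otimes_AI+I\otimes_A\mathcal H$, $\mathcal S(I)\subseteq I$. $\langle s-t\rangle$ is the ideal generated by all $s(a)-t(a)$; $\overline{\mathcal H}=\mathcal H/\langle s-t\rangle$ with classes $\bar x$, an $A$-algebra via $\eta(a)=\overline{s(a)}=\overline{t(a)}$; $\bar I=I/\langle s-t\rangle$. The map $\delta$ above is a well-defined right $\mathcal H$-coaction making $\overline{\mathcal H}$ a right $\mathcal H$-comodule algebra; tensor products $-\otimes_A\mathcal H$ use the $A$-module structure via $\eta$ on the left factor and via $s$ on $\mathcal H$. $I$ is normal if $\langle s-t\rangle\subseteq I$ and for every $x\in I$, $\sum\overline{x_2}\otimes_A\mathcal S(x_1)x_3$ lies in the image of $\bar I\otimes_A\mathcal H$ in $\overline{\mathcal H}\otimes_A\mathcal H$. *)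

theory Defs
  imports Main
begin

definition is_ring_hom :: "('a::comm_ring_1 \<Rightarrow> 'b::comm_ring_1) \<Rightarrow> bool" where
  "is_ring_hom f \<longleftrightarrow> f 1 = 1 \<and> (\<forall>x y. f (x + y) = f x + f y) \<and> (\<forall>x y. f (x * y) = f x * f y)"

definition ring_ideal :: "'a::comm_ring_1 set \<Rightarrow> bool" where
  "ring_ideal I \<longleftrightarrow> 0 \<in> I \<and> (\<forall>x\<in>I. \<forall>y\<in>I. x + y \<in> I) \<and> (\<forall>r. \<forall>x\<in>I. r * x \<in> I)"

definition ideal_gen :: "'a::comm_ring_1 set \<Rightarrow> 'a set" where
  "ideal_gen X = \<Inter>{I. ring_ideal I \<and> X \<subseteq> I}"

definition st_ideal :: "('a \<Rightarrow> 'h::comm_ring_1) \<Rightarrow> ('a \<Rightarrow> 'h) \<Rightarrow> 'h set" where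
  "st_ideal s t = ideal_gen (range (\<lambda>a. s a - t a))"

text \<open>An element of a tensor product is represented by a finite list of simple tensors
  (their sum).  Two representatives denote the same element iff they are related by the
  smallest equivalence, compatible with concatenation and commutative, containing the
  given defining relations (a presentation of the tensor product as an abelian group).\<close>

inductive teq :: "('p list \<times> 'p list) set \<Rightarrow> 'p list \<Rightarrow> 'p list \<Rightarrow> bool" for G where
  gen: "(x, y) \<in> G \<Longrightarrow> teq G x y"
| refl: "teq G x x"
| sym: "teq G x y \<Longrightarrow> teq G y x"
| trans: "teq G x y \<Longrightarrow> teq G y z \<Longrightarrow> teq G x z"
| app: "teq G x y \<Longrightarrow> teq G u v \<Longrightarrow> teq G (x @ u) (y @ v)"
| comm: "teq G (x @ y) (y @ x)"

text \<open>Defining relations of M \<otimes>_A N, where M, N are A-modules given by representatives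
  (types 'm, 'n) modulo congruences eqM, eqN, with A acting on M by lM and on N by rN.\<close>
definition tensor_gens ::
  "('a \<Rightarrow> 'm::ab_group_add \<Rightarrow> 'm) \<Rightarrow> ('a \<Rightarrow> 'n::ab_group_add \<Rightarrow> 'n) \<Rightarrow>
   ('m \<Rightarrow> 'm \<Rightarrow> bool) \<Rightarrow> ('n \<Rightarrow> 'n \<Rightarrow> bool) \<Rightarrow> (('m \<times> 'n) list \<times> ('m \<times> 'n) list) set" where
  "tensor_gens lM rN eqM eqN =
     {([(m + m', n)], [(m, n), (m', n)]) | m m' n. True}
   \<union> {([(m, n + n')], [(m, n), (m, n')]) | m n n'. True}
   \<union> {([(lM a m, n)], [(m, rN a n)]) | a m n. True}
   \<union> {([(m, n), (- m, n)], []) | m n. True}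
   \<union> {([(m, n)], [(m', n)]) | m m' n. eqM m m'}
   \<union> {([(m, n)], [(m, n')]) | m n n'. eqN n n'}"

text \<open>Defining relations of the triple tensor product M \<otimes>_A N \<otimes>_A P
  (A acts on M by l1, on N by r2 (from the left tensor) and l2 (towards the right), on P by r3).\<close>
definition tensor3_gens ::
  "('a \<Rightarrow> 'm::ab_group_add \<Rightarrow> 'm) \<Rightarrow> ('a \<Rightarrow> 'n::ab_group_add \<Rightarrow> 'n) \<Rightarrow>
   ('a \<Rightarrow> 'n \<Rightarrow> 'n) \<Rightarrow> ('a \<Rightarrow> 'p::ab_group_add \<Rightarrow> 'p) \<Rightarrow>
   (('m \<times> 'n \<times> 'p) list \<times> ('m \<times> 'n \<times> 'p) list) set" where
  "tensor3_gens l1 r2 l2 r3 =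
     {([(m + m', n, p)], [(m, n, p), (m', n, p)]) | m m' n p. True}
   \<union> {([(m, n + n', p)], [(m, n, p), (m, n', p)]) | m n n' p. True}
   \<union> {([(m, n, p + p')], [(m, n, p), (m, n, p')]) | m n p p'. True}
   \<union> {([(l1 a m, n, p)], [(m, r2 a n, p)]) | a m n p. True}
   \<union> {([(m, l2 a n, p)], [(m, n, r3 a p)]) | a m n p. True}
   \<union> {([(m, n, p), (- m, n, p)], []) | m n p. True}"

text \<open>Equality in H \<otimes>_A H (left factor an A-module via t, right factor via s).\<close>
definition HH_eq :: "('a \<Rightarrow> 'h::comm_ring_1) \<Rightarrow> ('a \<Rightarrow> 'h) \<Rightarrow> ('h \<times> 'h) list \<Rightarrow> ('h \<times> 'h) list \<Rightarrow> bool" where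
  "HH_eq s t = teq (tensor_gens (\<lambda>a x. t a * x) (\<lambda>a y. s a * y) (=) (=))"

definition HHH_eq :: "('a \<Rightarrow> 'h::comm_ring_1) \<Rightarrow> ('a \<Rightarrow> 'h) \<Rightarrow>
    ('h \<times> 'h \<times> 'h) list \<Rightarrow> ('h \<times> 'h \<times> 'h) list \<Rightarrow> bool" where
  "HHH_eq s t = teq (tensor3_gens (\<lambda>a x. t a * x) (\<lambda>a y. s a * y) (\<lambda>a y. t a * y) (\<lambda>a z. s a * z))"

text \<open>Equality in (H/J) \<otimes>_A H for an ideal J, with H/J an A-module via s and H via s.
  With J = <s-t> this is H-bar \<otimes>_A H (eta(a) = class of s(a) = class of t(a)).\<close>
definition quot_H_eq :: "('a \<Rightarrow> 'h::comm_ring_1) \<Rightarrow> 'h set \<Rightarrow> ('h \<times> 'h) list \<Rightarrow> ('h \<times> 'h) list \<Rightarrow> bool" where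
  "quot_H_eq s J = teq (tensor_gens (\<lambda>a x. s a * x) (\<lambda>a y. s a * y) (\<lambda>x x'. x - x' \<in> J) (=))"

definition tmult :: "('h::comm_ring_1 \<times> 'h) list \<Rightarrow> ('h \<times> 'h) list \<Rightarrow> ('h \<times> 'h) list" where
  "tmult xs ys = concat (map (\<lambda>(x, y). map (\<lambda>(x', y'). (x * x', y * y')) ys) xs)"

definition Delta_left :: "('h \<Rightarrow> ('h \<times> 'h) list) \<Rightarrow> 'h \<Rightarrow> ('h \<times> 'h \<times> 'h) list" where
  "Delta_left Delta h = concat (map (\<lambda>(x, y). map (\<lambda>(x1, x2). (x1, x2, y)) (Delta x)) (Delta h))"

definition Delta_right :: "('h \<Rightarrow> ('h \<times> 'h) list) \<Rightarrow> 'h \<Rightarrow> ('h \<times> 'h \<times> 'h) list" where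
  "Delta_right Delta h = concat (map (\<lambda>(x, y). map (\<lambda>(y1, y2). (x, y1, y2)) (Delta y)) (Delta h))"

text \<open>iA : k \<rightarrow> A is the k-algebra structure of A; H is a k-algebra via s o iA = t o iA.
  Delta h is a representative (list of simple tensors) of Delta(h) \<in> H \<otimes>_A H.\<close>
definition comm_hopf_algebroid ::
  "('k::field \<Rightarrow> 'a::comm_ring_1) \<Rightarrow> ('a \<Rightarrow> 'h::comm_ring_1) \<Rightarrow> ('a \<Rightarrow> 'h) \<Rightarrow> ('h \<Rightarrow> 'a) \<Rightarrow>
   ('h \<Rightarrow> ('h \<times> 'h) list) \<Rightarrow> ('h \<Rightarrow> 'h) \<Rightarrow> bool" where
  "comm_hopf_algebroid iA s t \<epsilon> Delta S \<longleftrightarrow>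
     is_ring_hom iA \<and> is_ring_hom s \<and> is_ring_hom t \<and> is_ring_hom \<epsilon> \<and> is_ring_hom S \<and>
     (\<forall>c. s (iA c) = t (iA c)) \<and>
     \<comment> \<open>Delta is a k-algebra map H \<rightarrow> H \<otimes>_A H\<close>
     HH_eq s t (Delta 1) [(1, 1)] \<and>
     (\<forall>x y. HH_eq s t (Delta (x + y)) (Delta x @ Delta y)) \<and>
     (\<forall>x y. HH_eq s t (Delta (x * y)) (tmult (Delta x) (Delta y))) \<and>
     \<comment> \<open>A-coring: Delta and epsilon are A-bimodule maps (H: left via s, right via t)\<close>
     (\<forall>a h. HH_eq s t (Delta (s a * h)) (map (\<lambda>(x, y). (s a * x, y)) (Delta h))) \<and>
     (\<forall>a h. HH_eq s t (Delta (t a * h)) (map (\<lambda>(x, y). (x, t a * y)) (Delta h))) \<and>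
     (\<forall>a h. \<epsilon> (s a * h) = a * \<epsilon> h) \<and>
     (\<forall>a h. \<epsilon> (t a * h) = \<epsilon> h * a) \<and>
     \<comment> \<open>coassociativity\<close>
     (\<forall>h. HHH_eq s t (Delta_left Delta h) (Delta_right Delta h)) \<and>
     \<comment> \<open>counitality\<close>
     (\<forall>h. sum_list (map (\<lambda>(x, y). s (\<epsilon> x) * y) (Delta h)) = h) \<and>
     (\<forall>h. sum_list (map (\<lambda>(x, y). t (\<epsilon> y) * x) (Delta h)) = h) \<and>
     \<comment> \<open>antipode\<close>
     (\<forall>a. S (s a) = t a) \<and> (\<forall>a. S (t a) = s a) \<and> (\<forall>h. S (S h) = h) \<and>
     (\<forall>u. sum_list (map (\<lambda>(x, y). S x * y) (Delta u)) = t (\<epsilon> u)) \<and>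
     (\<forall>u. sum_list (map (\<lambda>(x, y). x * S y) (Delta u)) = s (\<epsilon> u))"

definition hopf_ideal ::
  "('a::comm_ring_1 \<Rightarrow> 'h::comm_ring_1) \<Rightarrow> ('a \<Rightarrow> 'h) \<Rightarrow> ('h \<Rightarrow> 'a) \<Rightarrow>
   ('h \<Rightarrow> ('h \<times> 'h) list) \<Rightarrow> ('h \<Rightarrow> 'h) \<Rightarrow> 'h set \<Rightarrow> bool" where
  "hopf_ideal s t \<epsilon> Delta S I \<longleftrightarrow>
     ring_ideal I \<and> (\<forall>x\<in>I. \<epsilon> x = 0) \<and>
     (\<forall>x\<in>I. \<exists>zs. HH_eq s t (Delta x) zs \<and> (\<forall>(u, v)\<in>set zs. u \<in> I \<or> v \<in> I)) \<and>
     (\<forall>x\<in>I. S x \<in> I)"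

definition hbar_coaction :: "('h \<Rightarrow> ('h \<times> 'h) list) \<Rightarrow> ('h::comm_ring_1 \<Rightarrow> 'h) \<Rightarrow> 'h \<Rightarrow> ('h \<times> 'h) list" where
  "hbar_coaction Delta S h = map (\<lambda>(h1, h2, h3). (h2, S h1 * h3)) (Delta_left Delta h)"

definition normal_ideal ::
  "('a::comm_ring_1 \<Rightarrow> 'h::comm_ring_1) \<Rightarrow> ('a \<Rightarrow> 'h) \<Rightarrow>
   ('h \<Rightarrow> ('h \<times> 'h) list) \<Rightarrow> ('h \<Rightarrow> 'h) \<Rightarrow> 'h set \<Rightarrow> bool" where
  "normal_ideal s t Delta S I \<longleftrightarrow>
     st_ideal s t \<subseteq> I \<and>
     (\<forall>x\<in>I. \<exists>zs. set zs \<subseteq> I \<times> UNIV \<and>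
        quot_H_eq s (st_ideal s t) (hbar_coaction Delta S x) zs)"

end

theory Submission
  imports Defs
begin

text \<open>The coaction factors as \<open>hbar_coaction Delta S = coaction_on_tensor Delta S \<circ> Delta\<close>,
  where \<open>coaction_on_tensor\<close> represents \<open>h \<otimes> y \<mapsto> \<Sum> h\<^sub>2 \<otimes> S(h\<^sub>1) y\<close>; this map is well defined
  from \<open>H \<otimes>\<^sub>A H\<close> to \<open>H/\<langle>s-t\<rangle> \<otimes>\<^sub>A H\<close> because \<open>S\<close> turns the left \<open>t\<close>-action into an \<open>s\<close>-action
  and \<open>s\<close>, \<open>t\<close> agree modulo \<open>\<langle>s-t\<rangle>\<close>. Hence the coaction is additive. If \<open>I\<close> is normal,
  \<open>\<delta>(x) - \<delta>(y) = \<delta>(x - y)\<close> lies in the image of \<open>I \<otimes> H\<close> whenever \<open>x - y \<in> I\<close>, so \<open>\<delta>\<close>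
  descends to \<open>H/I\<close>. Conversely, if \<open>\<delta>\<close> descends then \<open>\<delta>(x)\<close> vanishes in \<open>H/I \<otimes>\<^sub>A H\<close> for
  \<open>x \<in> I\<close>, and by right exactness of the tensor product every such element is, already in
  \<open>H/\<langle>s-t\<rangle> \<otimes>\<^sub>A H\<close>, a sum of simple tensors with first factor in \<open>I\<close>.\<close>

declare teq.trans [trans]

abbreviation HH_gens :: "('a \<Rightarrow> 'h::comm_ring_1) \<Rightarrow> ('a \<Rightarrow> 'h) \<Rightarrow> (('h \<times> 'h) list \<times> ('h \<times> 'h) list) set"
  where "HH_gens s t \<equiv> tensor_gens (\<lambda>a x. t a * x) (\<lambda>a y. s a * y) (=) (=)"

abbreviation quot_H_gens :: "('a \<Rightarrow> 'h::comm_ring_1) \<Rightarrow> 'h set \<Rightarrow> (('h \<times> 'h) list \<times> ('h \<times> 'h) list) set"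
  where "quot_H_gens s J \<equiv> tensor_gens (\<lambda>a x. s a * x) (\<lambda>a y. s a * y) (\<lambda>x x'. x - x' \<in> J) (=)"

lemma teq_mono: "teq G x y \<Longrightarrow> G \<subseteq> G' \<Longrightarrow> teq G' x y"
  by (induction rule: teq.induct) (auto intro: teq.intros)

lemma teq_append_hom:
  assumes "teq G x y" and "\<And>u v. F (u @ v) = F u @ F v"
    and "\<And>u v. (u, v) \<in> G \<Longrightarrow> teq G' (F u) (F v)"
  shows "teq G' (F x) (F y)"
  using assms(1)
  by (induction rule: teq.induct) (auto simp: assms(2) intro: assms(3) teq.intros)

lemma teq_map:
  assumes "\<And>e. e \<in> set xs \<Longrightarrow> teq G [f e] [g e]"
  shows "teq G (map f xs) (map g xs)"
  using assms
proof (induction xs)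
  case Nil
  show ?case by (simp add: teq.refl)
next
  case (Cons e xs)
  then have "teq G ([f e] @ map f xs) ([g e] @ map g xs)" by (intro teq.app) auto
  then show ?case by simp
qed

lemma teq_append_map_inverse:
  assumes inverse: "\<And>p. teq G [p, \<nu> p] []"
  shows "teq G (xs @ map \<nu> xs) []"
proof (induction xs)
  case Nil
  show ?case by (simp add: teq.refl)
next
  case (Cons p xs)
  have "teq G ([p] @ (xs @ [\<nu> p]) @ map \<nu> xs) ([p] @ ([\<nu> p] @ xs) @ map \<nu> xs)"
    by (intro teq.app teq.refl teq.comm)
  moreover have "teq G ([p, \<nu> p] @ (xs @ map \<nu> xs)) ([] @ [])"
    by (intro teq.app inverse Cons.IH)
  ultimately show ?case by (auto intro: teq.trans)
qed

lemma teq_append_cancel_right: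
  assumes inverse: "\<And>p. teq G [p, \<nu> p] []" and "teq G (a @ c) (b @ c)"
  shows "teq G a b"
proof -
  have c: "teq G (c @ map \<nu> c) []" by (rule teq_append_map_inverse[OF inverse])
  have "teq G (a @ (c @ map \<nu> c)) (a @ [])" by (intro teq.app teq.refl c)
  then have "teq G a ((a @ c) @ map \<nu> c)" by (simp add: teq.sym)
  also have "teq G ((a @ c) @ map \<nu> c) ((b @ c) @ map \<nu> c)"
    by (intro teq.app teq.refl assms(2))
  also have "teq G (b @ (c @ map \<nu> c)) (b @ [])" by (intro teq.app teq.refl c)
  then have "teq G ((b @ c) @ map \<nu> c) b" by simp
  finally show ?thesis .
qed

lemma tensor_gens_cases:
  assumes "(x, y) \<in> tensor_gens lM rN eqM eqN"
    and "\<And>m m' n. P [(m + m', n)] [(m, n), (m', n)]"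
    and "\<And>m n n'. P [(m, n + n')] [(m, n), (m, n')]"
    and "\<And>a m n. P [(lM a m, n)] [(m, rN a n)]"
    and "\<And>m n. P [(m, n), (- m, n)] []"
    and "\<And>m m' n. eqM m m' \<Longrightarrow> P [(m, n)] [(m', n)]"
    and "\<And>m n n'. eqN n n' \<Longrightarrow> P [(m, n)] [(m, n')]"
  shows "P x y"
  using assms(1) unfolding tensor_gens_def by (auto intro: assms(2-7))

context
  fixes lM :: "'a \<Rightarrow> 'm::ab_group_add \<Rightarrow> 'm" and rN :: "'a \<Rightarrow> 'n::ab_group_add \<Rightarrow> 'n"
    and eqM :: "'m \<Rightarrow> 'm \<Rightarrow> bool" and eqN :: "'n \<Rightarrow> 'n \<Rightarrow> bool"
begin

private abbreviation "G \<equiv> tensor_gens lM rN eqM eqN"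

lemma tensor_add_left: "teq G [(m + m', n)] [(m, n), (m', n)]"
  by (rule teq.gen) (simp add: tensor_gens_def)

lemma tensor_add_right: "teq G [(m, n + n')] [(m, n), (m, n')]"
  by (rule teq.gen) (simp add: tensor_gens_def)

lemma tensor_balanced: "teq G [(lM a m, n)] [(m, rN a n)]"
  by (rule teq.gen) (auto simp: tensor_gens_def)

lemma tensor_neg_left: "teq G [(m, n), (- m, n)] []"
  by (rule teq.gen) (simp add: tensor_gens_def)

lemma tensor_cong_left: "eqM m m' \<Longrightarrow> teq G [(m, n)] [(m', n)]"
  by (rule teq.gen) (simp add: tensor_gens_def)

lemma tensor_append_cancel_right: "teq G (a @ c) (b @ c) \<Longrightarrow> teq G a b"
  by (rule teq_append_cancel_right[where \<nu> = "\<lambda>(m, n). (- m, n)"])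
    (auto simp: tensor_neg_left)

lemma tensor_zero_left: "teq G [(0, n)] []"
proof -
  have "teq G ([(0, n)] @ [(0, n)]) ([] @ [(0, n)])"
    using tensor_add_left[of 0 0 n] by (simp add: teq.sym)
  then show ?thesis by (rule tensor_append_cancel_right)
qed

lemma tensor_zero_right: "teq G [(m, 0)] []"
proof -
  have "teq G ([(m, 0)] @ [(m, 0)]) ([] @ [(m, 0)])"
    using tensor_add_right[of m 0 0] by (simp add: teq.sym)
  then show ?thesis by (rule tensor_append_cancel_right)
qed

lemma tensor_neg_right: "teq G [(m, n), (m, - n)] []"
proof -
  have "teq G [(m, n), (m, - n)] [(m, n + - n)]"
    by (rule teq.sym[OF tensor_add_right])
  also have "teq G [(m, n + - n)] []"
    using tensor_zero_right[of m] by simp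
  finally show ?thesis .
qed

lemma tensor_append_swap:
  assumes "teq G x (y @ zs)"
  shows "teq G y (x @ map (\<lambda>(m, n). (m, - n)) zs)"
proof -
  let ?neg = "map (\<lambda>(m, n). (m, - n)) zs"
  have "teq G (y @ (zs @ ?neg)) (y @ [])"
    by (intro teq.app teq.refl teq_append_map_inverse) (auto simp: tensor_neg_right)
  then have "teq G y ((y @ zs) @ ?neg)" by (simp add: teq.sym)
  also have "teq G ((y @ zs) @ ?neg) (x @ ?neg)"
    by (intro teq.app teq.sym[OF assms] teq.refl)
  finally show ?thesis .
qed

end

lemma HH_eq_sym: "HH_eq s t x y \<Longrightarrow> HH_eq s t y x"
  unfolding HH_eq_def by (rule teq.sym)

lemma HH_eq_trans [trans]: "HH_eq s t x y \<Longrightarrow> HH_eq s t y z \<Longrightarrow> HH_eq s t x z"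
  unfolding HH_eq_def by (rule teq.trans)

lemma quot_H_eq_refl: "quot_H_eq s J x x"
  unfolding quot_H_eq_def by (rule teq.refl)

lemma quot_H_eq_sym: "quot_H_eq s J x y \<Longrightarrow> quot_H_eq s J y x"
  unfolding quot_H_eq_def by (rule teq.sym)

lemma quot_H_eq_trans [trans]: "quot_H_eq s J x y \<Longrightarrow> quot_H_eq s J y z \<Longrightarrow> quot_H_eq s J x z"
  unfolding quot_H_eq_def by (rule teq.trans)

lemma quot_H_eq_append:
  "quot_H_eq s J x y \<Longrightarrow> quot_H_eq s J u v \<Longrightarrow> quot_H_eq s J (x @ u) (y @ v)"
  unfolding quot_H_eq_def by (rule teq.app)

lemma quot_H_eq_mono:
  assumes "J \<subseteq> I" and "quot_H_eq s J x y"
  shows "quot_H_eq s I x y"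
proof -
  have "quot_H_gens s J \<subseteq> quot_H_gens s I"
    using assms(1) unfolding tensor_gens_def by blast
  with assms(2) show ?thesis unfolding quot_H_eq_def by (rule teq_mono)
qed

lemma quot_H_eq_Nil_if_fst_in:
  assumes "set zs \<subseteq> I \<times> UNIV"
  shows "quot_H_eq s I zs []"
  using assms
proof (induction zs)
  case Nil
  show ?case by (rule quot_H_eq_refl)
next
  case (Cons p zs)
  obtain m n where p: "p = (m, n)" and "m \<in> I" using Cons.prems by auto
  from \<open>m \<in> I\<close> have "quot_H_eq s I [(m, n)] [(0, n)]"
    unfolding quot_H_eq_def by (intro tensor_cong_left) simp
  also have "quot_H_eq s I [(0, n)] []"
    unfolding quot_H_eq_def by (rule tensor_zero_left)
  finally have "quot_H_eq s I ([(m, n)] @ zs) ([] @ [])"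
    using Cons by (intro quot_H_eq_append) auto
  then show ?case using p by simp
qed

lemma quot_H_gens_lift:
  assumes "(x, y) \<in> quot_H_gens s I"
  shows "\<exists>zs. set zs \<subseteq> I \<times> UNIV \<and> teq (quot_H_gens s J) x (y @ zs)"
proof (cases "(x, y) \<in> quot_H_gens s J")
  case True
  then show ?thesis by (intro exI[of _ "[]"]) (simp add: teq.gen)
next
  case False
  \<comment> \<open>only the relations \<open>m \<otimes> n = m' \<otimes> n\<close> for \<open>m - m' \<in> I\<close> need a correction term\<close>
  with assms have "\<exists>m m' n. m - m' \<in> I \<and> x = [(m, n)] \<and> y = [(m', n)]"
    unfolding tensor_gens_def by auto
  then obtain m m' n where "m - m' \<in> I" "x = [(m, n)]" "y = [(m', n)]" by blast
  moreover have "teq (quot_H_gens s J) [(m' + (m - m'), n)] [(m', n), (m - m', n)]"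
    by (rule tensor_add_left)
  ultimately show ?thesis by (intro exI[of _ "[(m - m', n)]"]) simp
qed

text \<open>Right exactness of \<open>- \<otimes>\<^sub>A H\<close>. Correction terms are negated in the second factor,
  so they stay in \<open>I \<times> H\<close> without \<open>I\<close> being closed under negation.\<close>
lemma quot_H_eq_lift:
  assumes "quot_H_eq s I x y"
  shows "\<exists>zs. set zs \<subseteq> I \<times> UNIV \<and> quot_H_eq s J x (y @ zs)"
  using assms unfolding quot_H_eq_def
proof (induction rule: teq.induct)
  case (gen x y)
  then show ?case by (rule quot_H_gens_lift)
next
  case (refl x)
  show ?case by (intro exI[of _ "[]"]) (simp add: teq.refl)
next
  case (sym x y)
  then obtain zs where zs: "set zs \<subseteq> I \<times> UNIV" "teq (quot_H_gens s J) x (y @ zs)"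
    by blast
  have "set (map (\<lambda>(m, n). (m, - n)) zs) \<subseteq> I \<times> UNIV" using zs(1) by auto
  with tensor_append_swap[OF zs(2)] show ?case by blast
next
  case (trans x y z)
  then obtain z1 z2 where z: "set z1 \<subseteq> I \<times> UNIV" "teq (quot_H_gens s J) x (y @ z1)"
    "set z2 \<subseteq> I \<times> UNIV" "teq (quot_H_gens s J) y (z @ z2)" by blast
  have "teq (quot_H_gens s J) x ((z @ z2) @ z1)"
    by (rule teq.trans[OF z(2) teq.app[OF z(4) teq.refl]])
  with z show ?case by (intro exI[of _ "z2 @ z1"]) auto
next
  case (app x y u v)
  then obtain z1 z2 where z: "set z1 \<subseteq> I \<times> UNIV" "teq (quot_H_gens s J) x (y @ z1)"
    "set z2 \<subseteq> I \<times> UNIV" "teq (quot_H_gens s J) u (v @ z2)" by blast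
  have "teq (quot_H_gens s J) (x @ u) (y @ (z1 @ v) @ z2)"
    using teq.app[OF z(2) z(4)] by simp
  also have "teq (quot_H_gens s J) (y @ (z1 @ v) @ z2) (y @ (v @ z1) @ z2)"
    by (intro teq.app teq.refl teq.comm)
  finally have "teq (quot_H_gens s J) (x @ u) ((y @ v) @ (z1 @ z2))"
    by simp
  then show ?case using z by (intro exI[of _ "z1 @ z2"]) auto
next
  case (comm x y)
  show ?case by (intro exI[of _ "[]"]) (simp add: teq.comm)
qed

lemma HH_eq_imp_quot_H_eq_image:
  assumes "HH_eq s t x y" and "\<And>u v. F (u @ v) = F u @ F v"
    and "\<And>m m' n. quot_H_eq s J (F [(m + m', n)]) (F [(m, n), (m', n)])"
    and "\<And>m n n'. quot_H_eq s J (F [(m, n + n')]) (F [(m, n), (m, n')])"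
    and "\<And>a m n. quot_H_eq s J (F [(t a * m, n)]) (F [(m, s a * n)])"
    and "\<And>m n. quot_H_eq s J (F [(m, n), (- m, n)]) (F [])"
  shows "quot_H_eq s J (F x) (F y)"
  using assms(1,2) unfolding HH_eq_def quot_H_eq_def
proof (rule teq_append_hom)
  fix u v
  assume "(u, v) \<in> HH_gens s t"
  then show "teq (quot_H_gens s J) (F u) (F v)"
    by (rule tensor_gens_cases) (use assms(3-6) in \<open>auto simp: quot_H_eq_def teq.refl\<close>)
qed

lemma is_ring_hom_0: "is_ring_hom f \<Longrightarrow> f 0 = 0"
  unfolding is_ring_hom_def by (metis add_cancel_right_right add_0)

lemma is_ring_hom_uminus: "is_ring_hom f \<Longrightarrow> f (- x) = - f x"
  using is_ring_hom_0[of f] unfolding is_ring_hom_def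
  by (metis add.right_inverse add_eq_0_iff2)

lemma t_mult_diff_s_mult_in_st_ideal: "t a * x - s a * x \<in> st_ideal s t"
  unfolding st_ideal_def ideal_gen_def
proof clarify
  fix I
  assume "ring_ideal I" "range (\<lambda>a. s a - t a) \<subseteq> I"
  then have "(- x) * (s a - t a) \<in> I" unfolding ring_ideal_def by blast
  then show "t a * x - s a * x \<in> I" by (simp add: algebra_simps)
qed

definition swap_antipode :: "('h::comm_ring_1 \<Rightarrow> 'h) \<Rightarrow> 'h \<Rightarrow> ('h \<times> 'h) list \<Rightarrow> ('h \<times> 'h) list"
  where "swap_antipode S y xs = map (\<lambda>(x1, x2). (x2, S x1 * y)) xs"

definition coaction_on_tensor ::
  "('h \<Rightarrow> ('h \<times> 'h) list) \<Rightarrow> ('h::comm_ring_1 \<Rightarrow> 'h) \<Rightarrow> ('h \<times> 'h) list \<Rightarrow> ('h \<times> 'h) list"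
  where "coaction_on_tensor Delta S xs = concat (map (\<lambda>(x, y). swap_antipode S y (Delta x)) xs)"

lemma swap_antipode_append [simp]:
  "swap_antipode S y (u @ v) = swap_antipode S y u @ swap_antipode S y v"
  by (simp add: swap_antipode_def)

lemma swap_antipode_Nil [simp]: "swap_antipode S y [] = []"
  by (simp add: swap_antipode_def)

lemma coaction_on_tensor_append:
  "coaction_on_tensor Delta S (u @ v) = coaction_on_tensor Delta S u @ coaction_on_tensor Delta S v"
  by (simp add: coaction_on_tensor_def)

lemma hbar_coaction_eq: "hbar_coaction Delta S h = coaction_on_tensor Delta S (Delta h)"
  unfolding hbar_coaction_def coaction_on_tensor_def Delta_left_def swap_antipode_def
  by (simp add: map_concat comp_def split_def)

lemma swap_antipode_HH_eq:
  assumes S: "is_ring_hom S" and S_t: "\<And>a. S (t a) = s a" and "HH_eq s t x x'"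
  shows "quot_H_eq s J (swap_antipode S y x) (swap_antipode S y x')"
  using assms(3) swap_antipode_append
proof (rule HH_eq_imp_quot_H_eq_image)
  fix m m' n
  have "S (m + m') * y = S m * y + S m' * y"
    using S by (simp add: is_ring_hom_def distrib_right)
  then show "quot_H_eq s J (swap_antipode S y [(m + m', n)]) (swap_antipode S y [(m, n), (m', n)])"
    by (simp add: swap_antipode_def quot_H_eq_def tensor_add_right)
next
  fix m n n'
  show "quot_H_eq s J (swap_antipode S y [(m, n + n')]) (swap_antipode S y [(m, n), (m, n')])"
    by (simp add: swap_antipode_def quot_H_eq_def tensor_add_left)
next
  fix a m n
  have "S (t a * m) * y = s a * (S m * y)"
    using S S_t by (simp add: is_ring_hom_def)
  moreover have "quot_H_eq s J [(s a * n, S m * y)] [(n, s a * (S m * y))]"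
    unfolding quot_H_eq_def by (rule tensor_balanced)
  ultimately show "quot_H_eq s J (swap_antipode S y [(t a * m, n)]) (swap_antipode S y [(m, s a * n)])"
    by (simp add: swap_antipode_def quot_H_eq_sym)
next
  fix m n
  show "quot_H_eq s J (swap_antipode S y [(m, n), (- m, n)]) (swap_antipode S y [])"
    by (simp add: swap_antipode_def quot_H_eq_def is_ring_hom_uminus[OF S] tensor_neg_right)
qed

lemma swap_antipode_add:
  "quot_H_eq s J (swap_antipode S (y + y') xs) (swap_antipode S y xs @ swap_antipode S y' xs)"
proof (induction xs)
  case Nil
  show ?case by (simp add: quot_H_eq_refl)
next
  case (Cons e xs)
  obtain x1 x2 where e: "e = (x1, x2)" by fastforce
  let ?p = "(x2, S x1 * y)" and ?q = "(x2, S x1 * y')"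
  have "quot_H_eq s J ([(x2, S x1 * (y + y'))] @ swap_antipode S (y + y') xs)
      ([?p, ?q] @ (swap_antipode S y xs @ swap_antipode S y' xs))"
    using Cons.IH by (intro quot_H_eq_append) (simp_all add: distrib_left quot_H_eq_def tensor_add_right)
  also have "quot_H_eq s J ([?p, ?q] @ (swap_antipode S y xs @ swap_antipode S y' xs))
      ([?p] @ (swap_antipode S y xs @ [?q]) @ swap_antipode S y' xs)"
  proof -
    have "quot_H_eq s J ([?p] @ ([?q] @ swap_antipode S y xs) @ swap_antipode S y' xs)
        ([?p] @ (swap_antipode S y xs @ [?q]) @ swap_antipode S y' xs)"
      unfolding quot_H_eq_def by (intro teq.app teq.refl teq.comm)
    then show ?thesis by simp
  qed
  finally show ?case using e by (simp add: swap_antipode_def)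
qed

lemma Delta_zero:
  fixes Delta :: "'h::comm_ring_1 \<Rightarrow> ('h \<times> 'h) list"
  assumes Delta_add: "\<And>x y. HH_eq s t (Delta (x + y)) (Delta x @ Delta y)"
  shows "HH_eq s t (Delta 0) []"
proof -
  have "HH_eq s t (Delta 0 @ Delta 0) ([] @ Delta 0)"
    using HH_eq_sym[OF Delta_add[of 0 0]] by simp
  then show ?thesis unfolding HH_eq_def by (rule tensor_append_cancel_right)
qed

lemma swap_antipode_t_mult:
  "quot_H_eq s (st_ideal s t) (swap_antipode S y (map (\<lambda>(x1, x2). (x1, t a * x2)) xs))
    (swap_antipode S (s a * y) xs)"
proof -
  have pointwise: "teq (quot_H_gens s (st_ideal s t))
      [(t a * x2, S x1 * y)] [(x2, S x1 * (s a * y))]" for x1 x2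
  proof -
    have "teq (quot_H_gens s (st_ideal s t)) [(t a * x2, S x1 * y)] [(s a * x2, S x1 * y)]"
      by (rule tensor_cong_left) (rule t_mult_diff_s_mult_in_st_ideal)
    also have "teq (quot_H_gens s (st_ideal s t)) \<dots> [(x2, s a * (S x1 * y))]"
      by (rule tensor_balanced)
    finally show ?thesis by (simp add: mult.left_commute)
  qed
  show ?thesis
    unfolding quot_H_eq_def swap_antipode_def map_map
    by (rule teq_map) (use pointwise in auto)
qed

lemma Delta_append_uminus:
  fixes Delta :: "'h::comm_ring_1 \<Rightarrow> ('h \<times> 'h) list"
  assumes Delta_add: "\<And>x y. HH_eq s t (Delta (x + y)) (Delta x @ Delta y)"
  shows "HH_eq s t (Delta m @ Delta (- m)) []"
proof -
  have "HH_eq s t (Delta m @ Delta (- m)) (Delta (m + - m))"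
    by (rule HH_eq_sym[OF Delta_add])
  also have "HH_eq s t (Delta (m + - m)) []"
    using Delta_zero[OF Delta_add] by simp
  finally show ?thesis .
qed

lemma coaction_on_tensor_HH_eq:
  assumes H: "comm_hopf_algebroid iA s t \<epsilon> Delta S" and "HH_eq s t x x'"
  shows "quot_H_eq s (st_ideal s t) (coaction_on_tensor Delta S x) (coaction_on_tensor Delta S x')"
proof -
  have S: "is_ring_hom S" and S_t: "\<And>a. S (t a) = s a"
    and Delta_add: "\<And>x y. HH_eq s t (Delta (x + y)) (Delta x @ Delta y)"
    and Delta_t: "\<And>a h. HH_eq s t (Delta (t a * h)) (map (\<lambda>(x, y). (x, t a * y)) (Delta h))"
    using H unfolding comm_hopf_algebroid_def by blast+
  note swap = swap_antipode_HH_eq[OF S S_t]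
  show ?thesis
    using assms(2) coaction_on_tensor_append
  proof (rule HH_eq_imp_quot_H_eq_image)
    fix m m' n
    show "quot_H_eq s (st_ideal s t) (coaction_on_tensor Delta S [(m + m', n)])
        (coaction_on_tensor Delta S [(m, n), (m', n)])"
      using swap[OF Delta_add[of m m']] by (simp add: coaction_on_tensor_def)
  next
    fix m n n'
    show "quot_H_eq s (st_ideal s t) (coaction_on_tensor Delta S [(m, n + n')])
        (coaction_on_tensor Delta S [(m, n), (m, n')])"
      using swap_antipode_add by (simp add: coaction_on_tensor_def)
  next
    fix a m n
    have "quot_H_eq s (st_ideal s t) (swap_antipode S n (Delta (t a * m)))
        (swap_antipode S n (map (\<lambda>(x, y). (x, t a * y)) (Delta m)))"
      by (rule swap[OF Delta_t])
    also have "quot_H_eq s (st_ideal s t) \<dots> (swap_antipode S (s a * n) (Delta m))"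
      by (rule swap_antipode_t_mult)
    finally show "quot_H_eq s (st_ideal s t) (coaction_on_tensor Delta S [(t a * m, n)])
        (coaction_on_tensor Delta S [(m, s a * n)])"
      by (simp add: coaction_on_tensor_def)
  next
    fix m n
    have "quot_H_eq s (st_ideal s t) (swap_antipode S n (Delta m @ Delta (- m)))
        (swap_antipode S n [])"
      by (rule swap[OF Delta_append_uminus[OF Delta_add]])
    then show "quot_H_eq s (st_ideal s t) (coaction_on_tensor Delta S [(m, n), (- m, n)])
        (coaction_on_tensor Delta S [])"
      by (simp add: coaction_on_tensor_def)
  qed
qed

lemma hbar_coaction_add:
  assumes H: "comm_hopf_algebroid iA s t \<epsilon> Delta S"
  shows "quot_H_eq s (st_ideal s t) (hbar_coaction Delta S (x + y))
    (hbar_coaction Delta S x @ hbar_coaction Delta S y)"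
proof -
  have "HH_eq s t (Delta (x + y)) (Delta x @ Delta y)"
    using H unfolding comm_hopf_algebroid_def by blast
  from coaction_on_tensor_HH_eq[OF H this] show ?thesis
    by (simp add: hbar_coaction_eq coaction_on_tensor_append)
qed

lemma hbar_coaction_zero:
  assumes H: "comm_hopf_algebroid iA s t \<epsilon> Delta S"
  shows "quot_H_eq s (st_ideal s t) (hbar_coaction Delta S 0) []"
proof -
  have "HH_eq s t (Delta 0) []"
    using H unfolding comm_hopf_algebroid_def by (intro Delta_zero) blast
  from coaction_on_tensor_HH_eq[OF H this] show ?thesis
    by (simp add: hbar_coaction_eq coaction_on_tensor_def)
qed

lemma normal_ideal_imp_hbar_coaction_descends:
  assumes H: "comm_hopf_algebroid iA s t \<epsilon> Delta S" and N: "normal_ideal s t Delta S I"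
    and "x - y \<in> I"
  shows "quot_H_eq s I (hbar_coaction Delta S x) (hbar_coaction Delta S y)"
proof -
  have st: "st_ideal s t \<subseteq> I" using N unfolding normal_ideal_def by blast
  obtain zs where zs: "set zs \<subseteq> I \<times> UNIV"
    "quot_H_eq s (st_ideal s t) (hbar_coaction Delta S (x - y)) zs"
    using N \<open>x - y \<in> I\<close> unfolding normal_ideal_def by blast
  have "quot_H_eq s I (hbar_coaction Delta S x)
      (hbar_coaction Delta S y @ hbar_coaction Delta S (x - y))"
    using quot_H_eq_mono[OF st hbar_coaction_add[OF H, of y "x - y"]] by simp
  also have "quot_H_eq s I \<dots> (hbar_coaction Delta S y @ [])"
  proof (intro quot_H_eq_append quot_H_eq_refl)
    have "quot_H_eq s I (hbar_coaction Delta S (x - y)) zs" by (rule quot_H_eq_mono[OF st zs(2)])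
    also have "quot_H_eq s I zs []" by (rule quot_H_eq_Nil_if_fst_in[OF zs(1)])
    finally show "quot_H_eq s I (hbar_coaction Delta S (x - y)) []" .
  qed
  finally show ?thesis by simp
qed

lemma hbar_coaction_vanishing_imp_normal_ideal:
  assumes st: "st_ideal s t \<subseteq> I"
    and vanish: "\<And>x. x \<in> I \<Longrightarrow> quot_H_eq s I (hbar_coaction Delta S x) []"
  shows "normal_ideal s t Delta S I"
  unfolding normal_ideal_def
  using st quot_H_eq_lift[OF vanish, where J = "st_ideal s t"] by simp

theorem proposition3p18:
  fixes iA :: "'k::field \<Rightarrow> 'a::comm_ring_1"
    and s t :: "'a \<Rightarrow> 'h::comm_ring_1"
    and \<epsilon> :: "'h \<Rightarrow> 'a"
    and Delta :: "'h \<Rightarrow> ('h \<times> 'h) list"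
    and S :: "'h \<Rightarrow> 'h"
    and I :: "'h set"
  assumes "comm_hopf_algebroid iA s t \<epsilon> Delta S"
    and "hopf_ideal s t \<epsilon> Delta S I"
  shows "normal_ideal s t Delta S I \<longleftrightarrow>
    (st_ideal s t \<subseteq> I \<and>
     (\<exists>\<delta>' :: 'h \<Rightarrow> ('h \<times> 'h) list.
        (\<forall>x y. x - y \<in> I \<longrightarrow> quot_H_eq s I (\<delta>' x) (\<delta>' y)) \<and>
        (\<forall>x. quot_H_eq s I (\<delta>' x) (hbar_coaction Delta S x))))"
proof
  assume N: "normal_ideal s t Delta S I"
  then have "st_ideal s t \<subseteq> I" unfolding normal_ideal_def by blast
  moreover have "quot_H_eq s I (hbar_coaction Delta S x) (hbar_coaction Delta S y)"
    if "x - y \<in> I" for x y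
    by (rule normal_ideal_imp_hbar_coaction_descends[OF assms(1) N that])
  ultimately show "st_ideal s t \<subseteq> I \<and> (\<exists>\<delta>'. (\<forall>x y. x - y \<in> I \<longrightarrow> quot_H_eq s I (\<delta>' x) (\<delta>' y))
      \<and> (\<forall>x. quot_H_eq s I (\<delta>' x) (hbar_coaction Delta S x)))"
    using quot_H_eq_refl by blast
next
  assume "st_ideal s t \<subseteq> I \<and> (\<exists>\<delta>'. (\<forall>x y. x - y \<in> I \<longrightarrow> quot_H_eq s I (\<delta>' x) (\<delta>' y))
      \<and> (\<forall>x. quot_H_eq s I (\<delta>' x) (hbar_coaction Delta S x)))"
  then obtain \<delta>' where st: "st_ideal s t \<subseteq> I"
    and descends: "\<And>x y. x - y \<in> I \<Longrightarrow> quot_H_eq s I (\<delta>' x) (\<delta>' y)"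
    and lifts: "\<And>x. quot_H_eq s I (\<delta>' x) (hbar_coaction Delta S x)" by blast
  have "quot_H_eq s I (hbar_coaction Delta S x) []" if "x \<in> I" for x
  proof -
    have "quot_H_eq s I (hbar_coaction Delta S x) (\<delta>' x)" by (rule quot_H_eq_sym[OF lifts])
    also have "quot_H_eq s I \<dots> (\<delta>' 0)" using descends \<open>x \<in> I\<close> by simp
    also have "quot_H_eq s I \<dots> (hbar_coaction Delta S 0)" by (rule lifts)
    also have "quot_H_eq s I \<dots> []" by (rule quot_H_eq_mono[OF st hbar_coaction_zero[OF assms(1)]])
    finally show ?thesis .
  qed
  with st show "normal_ideal s t Delta S I" by (rule hbar_coaction_vanishing_imp_normal_ideal)
qed

end
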